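(* Let $\mathbb K$ be a field of characteristic $0$ and $N\ge2$. The image of the weight system $W^{\mathrm{St}}_{\mathfrak{so}_N}:\mathcal A(\downarrow\downarrow)_{\mathbb K}\to\mathrm{End}(\mathbb K^N)^{\otimes2}$ associated with $(\mathfrak{so}_N(\mathbb K),B_0,\mathrm{St})$ is a commutative subalgebra.
   Context: Jacobi diagrams on an oriented compact $1$-manifold $X$ span $\mathcal A(X)$ modulo AS, IHX, STU; $\mathcal A(X)_{\mathbb K}=\mathcal A(X)\otimes\mathbb K$; $\downarrow\downarrow$ is two downward oriented strands, and $\mathcal A(\downarrow\downarrow)$ is an algebra under stacking. For a metrized Lie algebra $(\mathfrak g,\langle\cdot,\cdot\rangle)$ over $\mathbb K$, the universal weight system $W_{\mathfrak g}:\mathcal A(\downarrow^{\otimes n})_{\mathbb K}\to U(\mathfrak g)^{\otimes n}$ is the algebra homomorphism obtained by putting on each edge the Casimir tensor $\Omega=\sum_av_a\otimes v^a$ (basis and dual basis w.r.t. the form), at each trivalent vertex $-\mathbf t$ where $\mathbf t\in\mathfrak g^{\otimes3}$ corresponds to $(x,y,z)\mapsto\langle[x,y],z\rangle$ (factors in cyclic order), contracting along edges and multiplying in $U(\mathfrak g)$ along each strand in its orientation order; for a representation $\rho:\mathfrak g\to\mathrm{End}(V)$, $W^\rho_{\mathfrak g}=U(\rho)^{\otimes n}\circ W_{\mathfrak g}$. $\mathfrak{so}_N(\mathbb K)$ is the Lie algebra of antisymmetric $N\times N$ matrices, $B_0(x,y)=\mathrm{tr}(xy)$ its trace form, and $\mathrm{St}$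 the standard representation on $\mathbb K^N$. *)

theory Defs
  imports "Jordan_Normal_Form.Matrix" "HOL-Library.FuncSet"
begin

text \<open>Elements of so_N(K) are antisymmetric N x N matrices; St is the inclusion
  into End(K^N) = N x N matrices.\<close>

definition soN :: "nat \<Rightarrow> 'k::field mat set" where
  "soN N = {x \<in> carrier_mat N N. transpose_mat x = - x}"

definition mtrace :: "'k::field mat \<Rightarrow> 'k" where
  "mtrace x = (\<Sum>i<dim_row x. x $$ (i, i))"

definition B0 :: "'k::field mat \<Rightarrow> 'k mat \<Rightarrow> 'k" where
  "B0 x y = mtrace (x * y)"

definition soidx :: "nat \<Rightarrow> (nat \<times> nat) set" where
  "soidx N = {(a, b). a < b \<and> b < N}"

definition sobasis :: "nat \<Rightarrow> nat \<times> nat \<Rightarrow> 'k::field mat" where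
  "sobasis N p = mat N N (\<lambda>(i, j).
      (if i = fst p \<and> j = snd p then 1 else 0) - (if i = snd p \<and> j = fst p then 1 else 0))"

definition is_dual_basis :: "nat \<Rightarrow> (nat \<times> nat \<Rightarrow> 'k::field mat) \<Rightarrow> bool" where
  "is_dual_basis N w \<longleftrightarrow>
     (\<forall>\<beta>\<in>soidx N. w \<beta> \<in> soN N) \<and>
     (\<forall>\<alpha>\<in>soidx N. \<forall>\<beta>\<in>soidx N. B0 (sobasis N \<alpha>) (w \<beta>) = (if \<alpha> = \<beta> then 1 else 0))"

text \<open>A Jacobi diagram on two oriented strands, encoded by half-edges.
  There are jd_edges D edges; edge e has the two half-edges 2e and 2e+1.
  jd_tri D lists the trivalent vertices, each as the triple of incident half-edges
  in its cyclic order; jd_str1 D / jd_str2 D list the half-edges ending at univalent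
  vertices on strand 1 / strand 2, in the order of the strand orientation.\<close>

record jdiag =
  jd_edges :: nat
  jd_tri :: "(nat \<times> nat \<times> nat) list"
  jd_str1 :: "nat list"
  jd_str2 :: "nat list"

definition wf_jdiag :: "jdiag \<Rightarrow> bool" where
  "wf_jdiag D \<longleftrightarrow>
     mset (concat (map (\<lambda>(a, b, c). [a, b, c]) (jd_tri D)) @ jd_str1 D @ jd_str2 D)
       = mset [0..<2 * jd_edges D]"

text \<open>An element of End(K^N) (x) End(K^N) = End(K^N (x) K^N) is represented by its
  matrix entries X (i1,i2) (j1,j2) (so A (x) B has entries A_{i1 j1} B_{i2 j2}),
  with entries outside the range {0..<N}^2 set to 0.\<close>

type_synonym 'k op2 = "nat \<times> nat \<Rightarrow> nat \<times> nat \<Rightarrow> 'k"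

definition idx2 :: "nat \<Rightarrow> (nat \<times> nat) set" where
  "idx2 N = {..<N} \<times> {..<N}"

definition mult2 :: "nat \<Rightarrow> 'k::field op2 \<Rightarrow> 'k op2 \<Rightarrow> 'k op2" where
  "mult2 N X Y = (\<lambda>p q. if p \<in> idx2 N \<and> q \<in> idx2 N
       then (\<Sum>r\<in>idx2 N. X p r * Y r q) else 0)"

definition one2 :: "nat \<Rightarrow> 'k::field op2" where
  "one2 N = (\<lambda>p q. if p \<in> idx2 N \<and> p = q then 1 else 0)"

text \<open>Each edge e carries the Casimir tensor sum_alpha v_alpha (x) v^alpha: given a
  labelling lab of edges by basis indices, half-edge 2e carries v_{lab e} and
  half-edge 2e+1 carries the dual vector v^{lab e}.\<close>

definition hvec :: "nat \<Rightarrow> (nat \<times> nat \<Rightarrow> 'k::field mat) \<Rightarrow> (nat \<Rightarrow> nat \<times> nat) \<Rightarrow> nat \<Rightarrow> 'k mat" where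
  "hvec N w lab h = (if even h then sobasis N (lab (h div 2)) else w (lab (h div 2)))"

text \<open>Trivalent vertex with legs carrying x,y,z (cyclic order): contraction with -t,
  i.e. the scalar -B_0([x,y],z).\<close>
definition vertex_val :: "'k::field mat \<Rightarrow> 'k mat \<Rightarrow> 'k mat \<Rightarrow> 'k" where
  "vertex_val x y z = - B0 (x * y - y * x) z"

definition strand_prod :: "nat \<Rightarrow> (nat \<times> nat \<Rightarrow> 'k::field mat) \<Rightarrow> (nat \<Rightarrow> nat \<times> nat) \<Rightarrow> nat list \<Rightarrow> 'k mat" where
  "strand_prod N w lab hs = foldr (\<lambda>h M. hvec N w lab h * M) hs (1\<^sub>m N)"

definition W_St :: "nat \<Rightarrow> (nat \<times> nat \<Rightarrow> 'k::field mat) \<Rightarrow> jdiag \<Rightarrow> 'k op2" where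
  "W_St N w D = (\<lambda>(i1, i2) (j1, j2).
     if (i1, i2) \<in> idx2 N \<and> (j1, j2) \<in> idx2 N then
       (\<Sum>lab \<in> {..<jd_edges D} \<rightarrow>\<^sub>E soidx N.
          prod_list (map (\<lambda>(a, b, c). vertex_val (hvec N w lab a) (hvec N w lab b) (hvec N w lab c))
                         (jd_tri D))
          * strand_prod N w lab (jd_str1 D) $$ (i1, j1)
          * strand_prod N w lab (jd_str2 D) $$ (i2, j2))
     else 0)"

text \<open>The image of W^St on A(two strands)_K: since A is spanned by Jacobi diagrams and
  W^St factors through the relations, the image is the K-span of the values on diagrams.\<close>
definition W_St_image :: "nat \<Rightarrow> (nat \<times> nat \<Rightarrow> 'k::field mat) \<Rightarrow> 'k op2 set" where
  "W_St_image N w = {(\<lambda>p q. \<Sum>i<n. c i * W_St N w (Ds i) p q) | (n::nat) (c::nat \<Rightarrow> 'k) (Ds::nat \<Rightarrow> jdiag).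
                        \<forall>i<n. wf_jdiag (Ds i)}"

end

(*
  Conjugation by a signed permutation matrix P, with entries rho i = +-1 at (i, pi i) for an
  involution pi, is an automorphism of so_N preserving the trace form, and it permutes the
  basis vectors E_ab - E_ba up to sign. It therefore fixes the Casimir tensor and the structure
  tensor, and every weight W = W^St(D) is invariant:
    rho i1 * rho i2 * rho j1 * rho j2 * W (pi i1, pi i2) (pi j1, pi j2) = W (i1, i2) (j1, j2).
  With rho the sign change at one coordinate k this shows (in characteristic 0) that an entry
  vanishes unless every index occurs an even number of times among i1, i2, j1, j2; with pi a
  transposition it then shows W p q = W q p for the remaining entries. So the image consists of
  symmetric matrices. Stacking diagrams is multiplication, so the image is a unital subalgebra,
  and an algebra of symmetric matrices is commutative: XY = (XY)^T = Y^T X^T = YX.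
*)

theory Submission
  imports Defs
begin

lemma sum_product_swap:
  fixes f :: "'a \<Rightarrow> 'c \<Rightarrow> 'd::semiring_0"
  shows "(\<Sum>x\<in>A. \<Sum>y\<in>B. \<Sum>z\<in>C. f x z * g y z) = (\<Sum>z\<in>C. (\<Sum>x\<in>A. f x z) * (\<Sum>y\<in>B. g y z))"
proof -
  have "(\<Sum>x\<in>A. \<Sum>y\<in>B. \<Sum>z\<in>C. f x z * g y z) = (\<Sum>x\<in>A. \<Sum>z\<in>C. \<Sum>y\<in>B. f x z * g y z)"
    by (rule sum.cong[OF refl], rule sum.swap)
  also have "\<dots> = (\<Sum>z\<in>C. \<Sum>x\<in>A. \<Sum>y\<in>B. f x z * g y z)"
    by (rule sum.swap)
  finally show ?thesis by (simp only: sum_product)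
qed

lemma sum_PiE_involution_reindex:
  assumes "\<forall>x\<in>S. g x \<in> S \<and> g (g x) = x"
  shows "(\<Sum>l\<in>A \<rightarrow>\<^sub>E S. F (restrict (g \<circ> l) A)) = (\<Sum>l\<in>A \<rightarrow>\<^sub>E S. F l)"
proof -
  have "restrict (g \<circ> restrict (g \<circ> l) A) A = l" and "restrict (g \<circ> l) A \<in> A \<rightarrow>\<^sub>E S"
    if "l \<in> A \<rightarrow>\<^sub>E S" for l
    using that assms by (auto simp: PiE_iff Pi_iff extensional_def fun_eq_iff)
  then show ?thesis
    by (intro sum.reindex_bij_witness[where i="\<lambda>l. restrict (g \<circ> l) A" and j="\<lambda>l. restrict (g \<circ> l) A"]) auto
qed

definition label_merge :: "nat \<Rightarrow> nat \<Rightarrow> (nat \<Rightarrow> 'a) \<Rightarrow> (nat \<Rightarrow> 'a) \<Rightarrow> nat \<Rightarrow> 'a" where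
  "label_merge m n l1 l2 = restrict (\<lambda>e. if e < m then l1 e else l2 (e - m)) {..<m + n}"

lemma label_merge_PiE:
  "l1 \<in> {..<m} \<rightarrow>\<^sub>E S \<Longrightarrow> l2 \<in> {..<n} \<rightarrow>\<^sub>E S \<Longrightarrow> label_merge m n l1 l2 \<in> {..<m + n} \<rightarrow>\<^sub>E S"
  by (auto simp: label_merge_def PiE_iff)

lemma restrict_label_merge:
  assumes "l1 \<in> {..<m} \<rightarrow>\<^sub>E S" "l2 \<in> {..<n} \<rightarrow>\<^sub>E S"
  shows "restrict (label_merge m n l1 l2) {..<m} = l1"
    and "restrict (\<lambda>e. label_merge m n l1 l2 (e + m)) {..<n} = l2"
proof
  fix x show "restrict (label_merge m n l1 l2) {..<m} x = l1 x"
    using assms(1) by (cases "x < m") (auto simp: label_merge_def PiE_def extensional_def)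
next
  show "restrict (\<lambda>e. label_merge m n l1 l2 (e + m)) {..<n} = l2"
  proof
    fix x show "restrict (\<lambda>e. label_merge m n l1 l2 (e + m)) {..<n} x = l2 x"
      using assms(2) by (cases "x < n") (auto simp: label_merge_def PiE_def extensional_def)
  qed
qed

lemma label_merge_restrict:
  assumes "l \<in> {..<m + n} \<rightarrow>\<^sub>E S"
  shows "label_merge m n (restrict l {..<m}) (restrict (\<lambda>e. l (e + m)) {..<n}) = l"
proof
  fix x show "label_merge m n (restrict l {..<m}) (restrict (\<lambda>e. l (e + m)) {..<n}) x = l x"
    using assms by (cases "x < m"; cases "x < m + n") (auto simp: label_merge_def PiE_def extensional_def)
qed

lemma sum_PiE_lessThan_add:
  "(\<Sum>l \<in> {..<m + n} \<rightarrow>\<^sub>E S. f l) = (\<Sum>l1 \<in> {..<m} \<rightarrow>\<^sub>E S. \<Sum>l2 \<in> {..<n} \<rightarrow>\<^sub>E S. f (label_merge m n l1 l2))"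
proof -
  let ?merge = "\<lambda>(l1, l2). label_merge m n l1 l2"
    and ?split = "\<lambda>l. (restrict l {..<m}, restrict (\<lambda>e. l (e + m)) {..<n})"
  have "(\<Sum>l \<in> {..<m + n} \<rightarrow>\<^sub>E S. f l)
      = (\<Sum>(l1, l2) \<in> ({..<m} \<rightarrow>\<^sub>E S) \<times> ({..<n} \<rightarrow>\<^sub>E S). f (label_merge m n l1 l2))"
  proof (rule sum.reindex_bij_witness[where i="?merge" and j="?split"])
    fix l assume l: "l \<in> {..<m + n} \<rightarrow>\<^sub>E S"
    show "?merge (?split l) = l" using label_merge_restrict[OF l] by simp
    show "(\<lambda>(l1, l2). f (label_merge m n l1 l2)) (?split l) = f l" using label_merge_restrict[OF l] by simp
    show "?split l \<in> ({..<m} \<rightarrow>\<^sub>E S) \<times> ({..<n} \<rightarrow>\<^sub>E S)" using l by (simp add: Pi_iff PiE_iff)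
  next
    fix p assume "p \<in> ({..<m} \<rightarrow>\<^sub>E S) \<times> ({..<n} \<rightarrow>\<^sub>E S)"
    then obtain l1 l2 where p: "p = (l1, l2)" "l1 \<in> {..<m} \<rightarrow>\<^sub>E S" "l2 \<in> {..<n} \<rightarrow>\<^sub>E S" by blast
    show "?split (?merge p) = p" using restrict_label_merge[OF p(2,3)] by (simp add: p(1))
    show "?merge p \<in> {..<m + n} \<rightarrow>\<^sub>E S" using label_merge_PiE[OF p(2,3)] by (simp add: p(1))
  qed
  then show ?thesis by (simp add: sum.cartesian_product)
qed

lemma smult_smult_mat: "a \<cdot>\<^sub>m (b \<cdot>\<^sub>m A) = (a * b) \<cdot>\<^sub>m (A :: 'k::comm_ring mat)"
  by (intro eq_matI) (auto simp: ac_simps)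

lemma smult_one_mat: "(1::'k::ring_1) \<cdot>\<^sub>m A = A"
  by (intro eq_matI) auto

lemma smult_mult_smult:
  "A \<in> carrier_mat n n \<Longrightarrow> B \<in> carrier_mat n n \<Longrightarrow> (a \<cdot>\<^sub>m A) * (b \<cdot>\<^sub>m B) = (a * b) \<cdot>\<^sub>m (A * B :: 'k::comm_ring mat)"
  by (intro eq_matI) (auto simp: scalar_prod_def sum_distrib_left ac_simps intro!: sum.cong)

lemma mtrace_smult: "M \<in> carrier_mat n n \<Longrightarrow> mtrace (k \<cdot>\<^sub>m M) = k * mtrace M"
  by (simp add: mtrace_def sum_distrib_left)

lemma index_mult_mat_sum:
  "A \<in> carrier_mat N N \<Longrightarrow> B \<in> carrier_mat N N \<Longrightarrow> i < N \<Longrightarrow> j < N \<Longrightarrow>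
    (A * B) $$ (i, j) = (\<Sum>k<N. A $$ (i, k) * B $$ (k, j))"
  by (simp add: scalar_prod_def atLeast0LessThan)

section \<open>The standard basis of so_N and its dual\<close>

lemma sobasis_carrier [simp]: "sobasis N p \<in> carrier_mat N N"
  by (simp add: sobasis_def)

lemma sobasis_dim [simp]: "dim_row (sobasis N p) = N" "dim_col (sobasis N p) = N"
  by (simp_all add: sobasis_def)

lemma sobasis_index:
  "i < N \<Longrightarrow> j < N \<Longrightarrow> sobasis N p $$ (i, j) =
     (if i = fst p \<and> j = snd p then 1 else 0) - (if i = snd p \<and> j = fst p then 1 else 0)"
  by (simp add: sobasis_def)

lemma sobasis_swap: "sobasis N (a, b) = (-1) \<cdot>\<^sub>m sobasis N (b, a)"
  by (rule eq_matI) (auto simp: sobasis_index)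

lemma B0_sobasis:
  assumes "x \<in> carrier_mat N N" "a < N" "b < N"
  shows "B0 (sobasis N (a, b)) x = x $$ (b, a) - x $$ (a, b)"
proof -
  have "(sobasis N (a, b) * x) $$ (i, i) = (if i = a then x $$ (b, i) else 0) - (if i = b then x $$ (a, i) else 0)"
    if "i < N" for i
    using that assms by (simp add: scalar_prod_def sobasis_index left_diff_distrib sum_subtractf
        if_distrib[of "\<lambda>c. c * _"] sum.delta' atLeast0LessThan cong: if_cong)
  then show ?thesis
    using assms by (simp add: B0_def mtrace_def sum_subtractf sum.delta')
qed

definition sobasis_dual :: "nat \<Rightarrow> nat \<times> nat \<Rightarrow> 'k::field mat" where
  "sobasis_dual N \<beta> = (-1/2) \<cdot>\<^sub>m sobasis N \<beta>"

lemma dual_basis_eq: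
  fixes w :: "nat \<times> nat \<Rightarrow> 'k::field_char_0 mat"
  assumes dual: "is_dual_basis N w" and \<beta>: "\<beta> \<in> soidx N"
  shows "w \<beta> = sobasis_dual N \<beta>"
proof -
  let ?x = "w \<beta>"
  have x: "?x \<in> carrier_mat N N" and antisym: "transpose_mat ?x = - ?x"
    using dual \<beta> by (auto simp: is_dual_basis_def soN_def)
  have x_antisym: "?x $$ (j, i) = - ?x $$ (i, j)" if "i < N" "j < N" for i j
    using arg_cong[OF antisym, of "\<lambda>M. M $$ (i, j)"] that x by simp
  have x_upper: "?x $$ (i, j) = (-1/2) * (if (i, j) = \<beta> then 1 else 0)" if "i < j" "j < N" for i j
  proof -
    have "(i, j) \<in> soidx N" using that by (simp add: soidx_def)
    then have "B0 (sobasis N (i, j)) ?x = (if (i, j) = \<beta> then 1 else 0)"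
      using dual \<beta> by (simp add: is_dual_basis_def)
    moreover have "B0 (sobasis N (i, j)) ?x = -2 * ?x $$ (i, j)"
      using B0_sobasis[OF x, of i j] x_antisym[of i j] that by simp
    ultimately have pairing: "-2 * ?x $$ (i, j) = (if (i, j) = \<beta> then 1 else 0)" by simp
    show ?thesis unfolding pairing[symmetric] by simp
  qed
  obtain a b where ab: "\<beta> = (a, b)" "a < b" "b < N" using \<beta> by (auto simp: soidx_def)
  show ?thesis
  proof (rule eq_matI)
    fix i j assume "i < dim_row (sobasis_dual N \<beta>)" "j < dim_col (sobasis_dual N \<beta>)"
    then have ij: "i < N" "j < N" by (auto simp: sobasis_dual_def)
    consider "i < j" | "i = j" | "j < i" by linarith
    then show "?x $$ (i, j) = sobasis_dual N \<beta> $$ (i, j)"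
    proof cases
      case 1 then show ?thesis using x_upper[OF 1 ij(2)] ij ab by (auto simp: sobasis_dual_def sobasis_index)
    next
      case 2 then show ?thesis using x_antisym[OF ij] ij ab by (auto simp: sobasis_dual_def sobasis_index)
    next
      case 3 then show ?thesis using x_upper[OF 3 ij(1)] x_antisym[OF ij] ij ab
          by (auto simp: sobasis_dual_def sobasis_index)
    qed
  qed (use x in \<open>auto simp: sobasis_dual_def\<close>)
qed

lemma hvec_dual_carrier [simp]: "hvec N (sobasis_dual N) lab h \<in> carrier_mat N N"
  by (simp add: hvec_def sobasis_dual_def)

definition tri_weight :: "(nat \<Rightarrow> 'k::field mat) \<Rightarrow> (nat \<times> nat \<times> nat) list \<Rightarrow> 'k" where
  "tri_weight v tri = (\<Prod>(a, b, c)\<leftarrow>tri. vertex_val (v a) (v b) (v c))"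

definition strand_mat :: "nat \<Rightarrow> (nat \<Rightarrow> 'k::field mat) \<Rightarrow> nat list \<Rightarrow> 'k mat" where
  "strand_mat N v hs = foldr (\<lambda>h M. v h * M) hs (1\<^sub>m N)"

lemma strand_mat_Nil [simp]: "strand_mat N v [] = 1\<^sub>m N"
  and strand_mat_Cons [simp]: "strand_mat N v (h # hs) = v h * strand_mat N v hs"
  by (simp_all add: strand_mat_def)

lemma strand_mat_carrier: "(\<And>h. v h \<in> carrier_mat N N) \<Longrightarrow> strand_mat N v hs \<in> carrier_mat N N"
  by (induction hs) (auto intro!: mult_carrier_mat)

definition state_weight :: "nat \<Rightarrow> jdiag \<Rightarrow> (nat \<Rightarrow> 'k::field mat) \<Rightarrow> nat \<Rightarrow> nat \<Rightarrow> nat \<Rightarrow> nat \<Rightarrow> 'k" where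
  "state_weight N D v i1 i2 j1 j2 = tri_weight v (jd_tri D)
     * strand_mat N v (jd_str1 D) $$ (i1, j1) * strand_mat N v (jd_str2 D) $$ (i2, j2)"

lemma W_St_state_sum:
  "W_St N w D (i1, i2) (j1, j2) = (if i1 < N \<and> i2 < N \<and> j1 < N \<and> j2 < N
     then (\<Sum>lab \<in> {..<jd_edges D} \<rightarrow>\<^sub>E soidx N. state_weight N D (hvec N w lab) i1 i2 j1 j2) else 0)"
  by (simp add: W_St_def state_weight_def tri_weight_def strand_mat_def strand_prod_def idx2_def)

definition tri_half_edges :: "(nat \<times> nat \<times> nat) list \<Rightarrow> nat list" where
  "tri_half_edges tri = concat (map (\<lambda>(a, b, c). [a, b, c]) tri)"

definition half_edges :: "jdiag \<Rightarrow> nat list" where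
  "half_edges D = tri_half_edges (jd_tri D) @ jd_str1 D @ jd_str2 D"

lemma tri_half_edges_simps [simp]:
  "tri_half_edges [] = []" "tri_half_edges ((a, b, c) # tri) = a # b # c # tri_half_edges tri"
  by (simp_all add: tri_half_edges_def)

lemma wf_jdiag_iff: "wf_jdiag D \<longleftrightarrow> mset (half_edges D) = mset [0..<2 * jd_edges D]"
  by (simp add: wf_jdiag_def half_edges_def tri_half_edges_def)

lemma wf_jdiag_edge_lt:
  assumes "wf_jdiag D" "h \<in> set (half_edges D)"
  shows "h div 2 < jd_edges D"
proof -
  have "set (half_edges D) = set [0..<2 * jd_edges D]"
    using assms(1) unfolding wf_jdiag_iff by (rule mset_eq_setD)
  then show ?thesis using assms(2) by auto
qed

lemma wf_jdiag_label_mem: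
  "wf_jdiag D \<Longrightarrow> lab \<in> {..<jd_edges D} \<rightarrow>\<^sub>E S \<Longrightarrow> h \<in> set (half_edges D) \<Longrightarrow> lab (h div 2) \<in> S"
  using wf_jdiag_edge_lt by blast

lemma tri_weight_cong:
  "\<forall>h\<in>set (tri_half_edges tri). v h = v' h \<Longrightarrow> tri_weight v tri = tri_weight v' tri"
  by (induction tri) (auto simp: tri_weight_def)

lemma strand_mat_cong: "\<forall>h\<in>set hs. v h = v' h \<Longrightarrow> strand_mat N v hs = strand_mat N v' hs"
  by (induction hs) simp_all

lemma state_weight_cong:
  "\<forall>h\<in>set (half_edges D). v h = v' h \<Longrightarrow> state_weight N D v i1 i2 j1 j2 = state_weight N D v' i1 i2 j1 j2"
  using tri_weight_cong[of "jd_tri D" v v'] strand_mat_cong[of _ v v' N]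
  by (simp add: state_weight_def half_edges_def)

(* W_St only uses w on soidx N, where the trace form determines it; sobasis_dual N has the
  advantage that all its values, including the junk ones, are N x N matrices. *)
lemma W_St_dual_basis:
  fixes w :: "nat \<times> nat \<Rightarrow> 'k::field_char_0 mat"
  assumes dual: "is_dual_basis N w" and wf: "wf_jdiag D"
  shows "W_St N w D = W_St N (sobasis_dual N) D"
proof (intro ext)
  fix p q :: "nat \<times> nat"
  have "state_weight N D (hvec N w lab) i1 i2 j1 j2 = state_weight N D (hvec N (sobasis_dual N) lab) i1 i2 j1 j2"
    if "lab \<in> {..<jd_edges D} \<rightarrow>\<^sub>E soidx N" for lab i1 i2 j1 j2
    by (rule state_weight_cong)
      (use wf_jdiag_label_mem[OF wf that] dual_basis_eq[OF dual] in \<open>simp add: hvec_def\<close>)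
  then show "W_St N w D p q = W_St N (sobasis_dual N) D p q"
    by (cases p; cases q) (simp add: W_St_state_sum cong: sum.cong)
qed

section \<open>Conjugation by signed permutations\<close>

definition signed_involution :: "nat \<Rightarrow> (nat \<Rightarrow> 'k::field) \<Rightarrow> (nat \<Rightarrow> nat) \<Rightarrow> bool" where
  "signed_involution N \<rho> \<pi> \<longleftrightarrow> (\<forall>i<N. \<pi> i < N \<and> \<pi> (\<pi> i) = i) \<and> (\<forall>i. \<rho> i * \<rho> i = 1)"

(* M |-> P * M * P^-1 for the signed permutation matrix P with P (i, pi i) = rho i. *)
definition sp_conj :: "nat \<Rightarrow> (nat \<Rightarrow> 'k::field) \<Rightarrow> (nat \<Rightarrow> nat) \<Rightarrow> 'k mat \<Rightarrow> 'k mat" where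
  "sp_conj N \<rho> \<pi> M = mat N N (\<lambda>(i, j). \<rho> i * \<rho> j * M $$ (\<pi> i, \<pi> j))"

lemma sp_conj_carrier [simp]: "sp_conj N \<rho> \<pi> M \<in> carrier_mat N N"
  by (simp add: sp_conj_def)

lemma sp_conj_dim [simp]: "dim_row (sp_conj N \<rho> \<pi> M) = N" "dim_col (sp_conj N \<rho> \<pi> M) = N"
  by (simp_all add: sp_conj_def)

lemma sp_conj_index:
  "i < N \<Longrightarrow> j < N \<Longrightarrow> sp_conj N \<rho> \<pi> M $$ (i, j) = \<rho> i * \<rho> j * M $$ (\<pi> i, \<pi> j)"
  by (simp add: sp_conj_def)

lemma signed_involution_lt: "signed_involution N \<rho> \<pi> \<Longrightarrow> i < N \<Longrightarrow> \<pi> i < N"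
  by (simp add: signed_involution_def)

lemma signed_involution_eq_iff:
  "signed_involution N \<rho> \<pi> \<Longrightarrow> i < N \<Longrightarrow> j < N \<Longrightarrow> \<pi> i = j \<longleftrightarrow> i = \<pi> j"
  unfolding signed_involution_def by metis

lemma sum_signed_involution_reindex:
  "signed_involution N \<rho> \<pi> \<Longrightarrow> (\<Sum>k<N. f (\<pi> k)) = (\<Sum>k<N. f k)"
  by (rule sum.reindex_bij_witness[where i=\<pi> and j=\<pi>]) (auto simp: signed_involution_def)

lemma sp_conj_mult:
  assumes inv: "signed_involution N \<rho> \<pi>" and A: "A \<in> carrier_mat N N" and B: "B \<in> carrier_mat N N"
  shows "sp_conj N \<rho> \<pi> (A * B) = sp_conj N \<rho> \<pi> A * sp_conj N \<rho> \<pi> B"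
proof (rule eq_matI)
  fix i j assume "i < dim_row (sp_conj N \<rho> \<pi> A * sp_conj N \<rho> \<pi> B)" "j < dim_col (sp_conj N \<rho> \<pi> A * sp_conj N \<rho> \<pi> B)"
  then have ij: "i < N" "j < N" by auto
  have "(sp_conj N \<rho> \<pi> A * sp_conj N \<rho> \<pi> B) $$ (i, j)
      = (\<Sum>k<N. \<rho> i * \<rho> j * (A $$ (\<pi> i, \<pi> k) * B $$ (\<pi> k, \<pi> j)) * (\<rho> k * \<rho> k))"
    using ij by (simp add: scalar_prod_def atLeast0LessThan sp_conj_index ac_simps)
  also have "\<dots> = (\<Sum>k<N. \<rho> i * \<rho> j * (A $$ (\<pi> i, \<pi> k) * B $$ (\<pi> k, \<pi> j)))"
    using inv by (simp add: signed_involution_def)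
  also have "\<dots> = (\<Sum>k<N. \<rho> i * \<rho> j * (A $$ (\<pi> i, k) * B $$ (k, \<pi> j)))"
    by (rule sum_signed_involution_reindex[OF inv])
  also have "\<dots> = sp_conj N \<rho> \<pi> (A * B) $$ (i, j)"
    using ij A B signed_involution_lt[OF inv]
    by (simp add: sp_conj_index scalar_prod_def atLeast0LessThan sum_distrib_left)
  finally show "sp_conj N \<rho> \<pi> (A * B) $$ (i, j) = (sp_conj N \<rho> \<pi> A * sp_conj N \<rho> \<pi> B) $$ (i, j)" ..
qed auto

lemma sp_conj_one: "signed_involution N \<rho> \<pi> \<Longrightarrow> sp_conj N \<rho> \<pi> (1\<^sub>m N) = 1\<^sub>m N"
  by (rule eq_matI) (auto simp: sp_conj_index signed_involution_lt signed_involution_eq_iff,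
      auto simp: signed_involution_def)

lemma sp_conj_smult: "sp_conj N \<rho> \<pi> (c \<cdot>\<^sub>m M) = c \<cdot>\<^sub>m sp_conj N \<rho> \<pi> M"
  if "M \<in> carrier_mat N N" "signed_involution N \<rho> \<pi>"
  using that by (intro eq_matI) (auto simp: sp_conj_index signed_involution_lt)

lemma sp_conj_minus: "sp_conj N \<rho> \<pi> (A - B) = sp_conj N \<rho> \<pi> A - sp_conj N \<rho> \<pi> B"
  if "A \<in> carrier_mat N N" "B \<in> carrier_mat N N" "signed_involution N \<rho> \<pi>"
  using that by (intro eq_matI) (auto simp: sp_conj_index signed_involution_lt algebra_simps)

lemma mtrace_sp_conj:
  assumes inv: "signed_involution N \<rho> \<pi>" and M: "M \<in> carrier_mat N N"
  shows "mtrace (sp_conj N \<rho> \<pi> M) = mtrace M"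
proof -
  have "mtrace (sp_conj N \<rho> \<pi> M) = (\<Sum>i<N. M $$ (\<pi> i, \<pi> i))"
    unfolding mtrace_def using inv by (intro sum.cong) (auto simp: sp_conj_index signed_involution_def)
  also have "\<dots> = mtrace M"
    using sum_signed_involution_reindex[OF inv, of "\<lambda>i. M $$ (i, i)"] M by (simp add: mtrace_def)
  finally show ?thesis .
qed

lemma vertex_val_sp_conj:
  assumes inv: "signed_involution N \<rho> \<pi>"
    and xyz: "x \<in> carrier_mat N N" "y \<in> carrier_mat N N" "z \<in> carrier_mat N N"
  shows "vertex_val (sp_conj N \<rho> \<pi> x) (sp_conj N \<rho> \<pi> y) (sp_conj N \<rho> \<pi> z) = vertex_val x y z"
proof -
  have xy: "x * y - y * x \<in> carrier_mat N N" using xyz by auto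
  have "sp_conj N \<rho> \<pi> (x * y - y * x) = sp_conj N \<rho> \<pi> x * sp_conj N \<rho> \<pi> y - sp_conj N \<rho> \<pi> y * sp_conj N \<rho> \<pi> x"
    using xyz by (simp add: sp_conj_minus[OF _ _ inv] sp_conj_mult[OF inv])
  then have "(sp_conj N \<rho> \<pi> x * sp_conj N \<rho> \<pi> y - sp_conj N \<rho> \<pi> y * sp_conj N \<rho> \<pi> x) * sp_conj N \<rho> \<pi> z
      = sp_conj N \<rho> \<pi> ((x * y - y * x) * z)"
    using sp_conj_mult[OF inv xy xyz(3)] by simp
  moreover have "(x * y - y * x) * z \<in> carrier_mat N N" using xyz by auto
  ultimately show ?thesis by (simp add: vertex_val_def B0_def mtrace_sp_conj[OF inv])
qed

lemma vertex_val_smult: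
  assumes "x \<in> carrier_mat N N" "y \<in> carrier_mat N N" "z \<in> carrier_mat N N"
  shows "vertex_val (a \<cdot>\<^sub>m x) (b \<cdot>\<^sub>m y) (c \<cdot>\<^sub>m z) = a * b * c * vertex_val x y z"
proof -
  have "(a \<cdot>\<^sub>m x * (b \<cdot>\<^sub>m y) - b \<cdot>\<^sub>m y * (a \<cdot>\<^sub>m x)) * (c \<cdot>\<^sub>m z) = (a * b * c) \<cdot>\<^sub>m ((x * y - y * x) * z)"
    using assms by (intro eq_matI) (auto simp: scalar_prod_def sum_distrib_left algebra_simps intro!: sum.cong)
  moreover have "(x * y - y * x) * z \<in> carrier_mat N N" using assms by auto
  ultimately show ?thesis by (simp add: vertex_val_def B0_def mtrace_smult)
qed

lemma sp_conj_sobasis: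
  assumes inv: "signed_involution N \<rho> \<pi>" and ab: "a < N" "b < N"
  shows "sp_conj N \<rho> \<pi> (sobasis N (a, b)) = (\<rho> (\<pi> a) * \<rho> (\<pi> b)) \<cdot>\<^sub>m sobasis N (\<pi> a, \<pi> b)"
  by (rule eq_matI)
    (use ab signed_involution_lt[OF inv] signed_involution_eq_iff[OF inv] in \<open>auto simp: sp_conj_index sobasis_index\<close>)

definition sp_label :: "(nat \<Rightarrow> nat) \<Rightarrow> nat \<times> nat \<Rightarrow> nat \<times> nat" where
  "sp_label \<pi> p = (min (\<pi> (fst p)) (\<pi> (snd p)), max (\<pi> (fst p)) (\<pi> (snd p)))"

definition sp_sign :: "(nat \<Rightarrow> 'k::field) \<Rightarrow> (nat \<Rightarrow> nat) \<Rightarrow> nat \<times> nat \<Rightarrow> 'k" where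
  "sp_sign \<rho> \<pi> p = \<rho> (\<pi> (fst p)) * \<rho> (\<pi> (snd p)) * (if \<pi> (fst p) < \<pi> (snd p) then 1 else -1)"

lemma sp_label_soidx:
  assumes inv: "signed_involution N \<rho> \<pi>" and p: "p \<in> soidx N"
  shows "sp_label \<pi> p \<in> soidx N" and "sp_label \<pi> (sp_label \<pi> p) = p"
proof -
  obtain a b where ab: "p = (a, b)" "a < b" "b < N" using p by (auto simp: soidx_def)
  then have "\<pi> a < N" "\<pi> b < N" "\<pi> (\<pi> a) = a" "\<pi> (\<pi> b) = b"
    using inv by (auto simp: signed_involution_def)
  moreover from this have "\<pi> a \<noteq> \<pi> b" using ab(2) by (metis less_irrefl)
  ultimately show "sp_label \<pi> p \<in> soidx N" "sp_label \<pi> (sp_label \<pi> p) = p"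
    using ab by (auto simp: soidx_def sp_label_def min_def max_def)
qed

lemma sp_sign_square: "signed_involution N \<rho> \<pi> \<Longrightarrow> sp_sign \<rho> \<pi> p * sp_sign \<rho> \<pi> p = 1"
  unfolding signed_involution_def sp_sign_def by (simp add: algebra_simps)

lemma sp_conj_sobasis_soidx:
  assumes inv: "signed_involution N \<rho> \<pi>" and p: "p \<in> soidx N"
  shows "sp_conj N \<rho> \<pi> (sobasis N p) = sp_sign \<rho> \<pi> p \<cdot>\<^sub>m sobasis N (sp_label \<pi> p)"
proof -
  obtain a b where ab: "p = (a, b)" "a < N" "b < N" using p by (auto simp: soidx_def)
  show ?thesis
    unfolding ab(1) sp_conj_sobasis[OF inv ab(2,3)]
    by (cases "\<pi> a < \<pi> b")
      (simp_all add: sp_sign_def sp_label_def smult_smult_mat sobasis_swap[of N "\<pi> a" "\<pi> b"])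
qed

lemma sp_conj_hvec:
  assumes inv: "signed_involution N \<rho> \<pi>" and lab: "lab (h div 2) \<in> soidx N"
  shows "sp_conj N \<rho> \<pi> (hvec N (sobasis_dual N) lab h)
       = sp_sign \<rho> \<pi> (lab (h div 2)) \<cdot>\<^sub>m hvec N (sobasis_dual N) (sp_label \<pi> \<circ> lab) h"
  by (simp add: hvec_def sobasis_dual_def sp_conj_smult[OF _ inv] sp_conj_sobasis_soidx[OF inv lab]
      smult_smult_mat mult.commute)

lemma sp_conj_strand_mat:
  assumes inv: "signed_involution N \<rho> \<pi>"
    and v: "\<And>h. v h \<in> carrier_mat N N" and v': "\<And>h. v' h \<in> carrier_mat N N"
    and conj: "\<forall>h\<in>set hs. sp_conj N \<rho> \<pi> (v h) = s h \<cdot>\<^sub>m v' h"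
  shows "sp_conj N \<rho> \<pi> (strand_mat N v hs) = (\<Prod>h\<leftarrow>hs. s h) \<cdot>\<^sub>m strand_mat N v' hs"
  using conj
proof (induction hs)
  case Nil
  then show ?case by (simp add: sp_conj_one[OF inv] smult_one_mat)
next
  case (Cons h hs)
  then show ?case
    by (simp add: sp_conj_mult[OF inv v strand_mat_carrier[OF v]] smult_mult_smult[OF v' strand_mat_carrier[OF v']])
qed

lemma tri_weight_sp_conj:
  assumes inv: "signed_involution N \<rho> \<pi>"
    and v: "\<And>h. v h \<in> carrier_mat N N" and v': "\<And>h. v' h \<in> carrier_mat N N"
    and conj: "\<forall>h\<in>set (tri_half_edges tri). sp_conj N \<rho> \<pi> (v h) = s h \<cdot>\<^sub>m v' h"
  shows "tri_weight v tri = (\<Prod>h\<leftarrow>tri_half_edges tri. s h) * tri_weight v' tri"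
  using conj
proof (induction tri)
  case Nil
  then show ?case by (simp add: tri_weight_def)
next
  case (Cons t tri)
  obtain a b c where t: "t = (a, b, c)" by (cases t)
  have "vertex_val (v a) (v b) (v c) = vertex_val (sp_conj N \<rho> \<pi> (v a)) (sp_conj N \<rho> \<pi> (v b)) (sp_conj N \<rho> \<pi> (v c))"
    by (simp add: vertex_val_sp_conj[OF inv v v v])
  also have "\<dots> = s a * s b * s c * vertex_val (v' a) (v' b) (v' c)"
    using Cons.prems by (simp add: t vertex_val_smult[OF v' v' v'])
  finally show ?case
    using Cons by (simp add: t tri_weight_def)
qed

lemma state_weight_sp_conj:
  assumes inv: "signed_involution N \<rho> \<pi>"
    and v: "\<And>h. v h \<in> carrier_mat N N" and v': "\<And>h. v' h \<in> carrier_mat N N"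
    and conj: "\<forall>h\<in>set (half_edges D). sp_conj N \<rho> \<pi> (v h) = s h \<cdot>\<^sub>m v' h"
    and signs: "(\<Prod>h\<leftarrow>half_edges D. s h) = 1"
    and ij: "i1 < N" "i2 < N" "j1 < N" "j2 < N"
  shows "\<rho> i1 * \<rho> i2 * \<rho> j1 * \<rho> j2 * state_weight N D v (\<pi> i1) (\<pi> i2) (\<pi> j1) (\<pi> j2)
       = state_weight N D v' i1 i2 j1 j2"
proof -
  have strand: "\<rho> i * \<rho> j * strand_mat N v hs $$ (\<pi> i, \<pi> j) = (\<Prod>h\<leftarrow>hs. s h) * strand_mat N v' hs $$ (i, j)"
    if "set hs \<subseteq> set (half_edges D)" "i < N" "j < N" for hs i j
  proof -
    have "\<rho> i * \<rho> j * strand_mat N v hs $$ (\<pi> i, \<pi> j) = sp_conj N \<rho> \<pi> (strand_mat N v hs) $$ (i, j)"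
      using that by (simp add: sp_conj_index)
    also have "\<dots> = (\<Prod>h\<leftarrow>hs. s h) * strand_mat N v' hs $$ (i, j)"
      using that conj carrier_matD[OF strand_mat_carrier[where v=v', OF v']]
      by (subst sp_conj_strand_mat[OF inv v v']) auto
    finally show ?thesis .
  qed
  have tri: "tri_weight v (jd_tri D) = (\<Prod>h\<leftarrow>tri_half_edges (jd_tri D). s h) * tri_weight v' (jd_tri D)"
    using conj by (intro tri_weight_sp_conj[OF inv v v']) (simp add: half_edges_def)
  have str1: "\<rho> i1 * \<rho> j1 * strand_mat N v (jd_str1 D) $$ (\<pi> i1, \<pi> j1)
      = (\<Prod>h\<leftarrow>jd_str1 D. s h) * strand_mat N v' (jd_str1 D) $$ (i1, j1)"
    using ij by (intro strand) (auto simp: half_edges_def)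
  have str2: "\<rho> i2 * \<rho> j2 * strand_mat N v (jd_str2 D) $$ (\<pi> i2, \<pi> j2)
      = (\<Prod>h\<leftarrow>jd_str2 D. s h) * strand_mat N v' (jd_str2 D) $$ (i2, j2)"
    using ij by (intro strand) (auto simp: half_edges_def)
  have signs': "(\<Prod>h\<leftarrow>tri_half_edges (jd_tri D). s h) * (\<Prod>h\<leftarrow>jd_str1 D. s h) * (\<Prod>h\<leftarrow>jd_str2 D. s h) = 1"
    using signs by (simp add: half_edges_def mult.assoc)
  have "\<rho> i1 * \<rho> i2 * \<rho> j1 * \<rho> j2 * state_weight N D v (\<pi> i1) (\<pi> i2) (\<pi> j1) (\<pi> j2)
      = tri_weight v (jd_tri D) * (\<rho> i1 * \<rho> j1 * strand_mat N v (jd_str1 D) $$ (\<pi> i1, \<pi> j1))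
        * (\<rho> i2 * \<rho> j2 * strand_mat N v (jd_str2 D) $$ (\<pi> i2, \<pi> j2))"
    by (simp add: state_weight_def ac_simps)
  also have "\<dots> = ((\<Prod>h\<leftarrow>tri_half_edges (jd_tri D). s h) * (\<Prod>h\<leftarrow>jd_str1 D. s h) * (\<Prod>h\<leftarrow>jd_str2 D. s h))
      * state_weight N D v' i1 i2 j1 j2"
    unfolding tri str1 str2 by (simp add: state_weight_def ac_simps)
  finally show ?thesis unfolding signs' by simp
qed

lemma prod_upt_double_square:
  assumes "\<And>e. t e * t e = (1::'k::comm_monoid_mult)"
  shows "(\<Prod>h\<leftarrow>[0..<2 * n]. t (h div 2)) = 1"
proof (induction n)
  case (Suc n)
  have "[0..<2 * Suc n] = [0..<2 * n] @ [2 * n, Suc (2 * n)]" by simp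
  then show ?case using Suc assms by simp
qed simp

lemma prod_half_edges_square:
  assumes wf: "wf_jdiag D" and t: "\<And>e. t e * t e = (1::'k::comm_monoid_mult)"
  shows "(\<Prod>h\<leftarrow>half_edges D. t (h div 2)) = 1"
proof -
  have prod_list_mset: "(\<Prod>h\<leftarrow>xs. f h) = prod_mset (image_mset f (mset xs))" for xs and f :: "nat \<Rightarrow> 'k"
    by (simp flip: prod_mset_prod_list)
  have "(\<Prod>h\<leftarrow>half_edges D. t (h div 2)) = (\<Prod>h\<leftarrow>[0..<2 * jd_edges D]. t (h div 2))"
    using wf unfolding wf_jdiag_iff prod_list_mset by simp
  then show ?thesis using prod_upt_double_square[OF t] by simp
qed

(* Each edge picks up the sign sp_sign twice, once per half-edge, and relabelling the
  edges by sp_label permutes the states. *)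
lemma W_St_sp_conj:
  assumes inv: "signed_involution N \<rho> \<pi>" and wf: "wf_jdiag D"
    and ij: "i1 < N" "i2 < N" "j1 < N" "j2 < N"
  shows "\<rho> i1 * \<rho> i2 * \<rho> j1 * \<rho> j2 * W_St N (sobasis_dual N) D (\<pi> i1, \<pi> i2) (\<pi> j1, \<pi> j2)
       = W_St N (sobasis_dual N) D (i1, i2) (j1, j2)"
proof -
  let ?E = "{..<jd_edges D}" and ?v = "hvec N (sobasis_dual N)"
  have state: "\<rho> i1 * \<rho> i2 * \<rho> j1 * \<rho> j2 * state_weight N D (?v lab) (\<pi> i1) (\<pi> i2) (\<pi> j1) (\<pi> j2)
      = state_weight N D (?v (restrict (sp_label \<pi> \<circ> lab) ?E)) i1 i2 j1 j2"
    if lab: "lab \<in> ?E \<rightarrow>\<^sub>E soidx N" for lab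
  proof -
    have labels: "lab (h div 2) \<in> soidx N" if "h \<in> set (half_edges D)" for h
      by (rule wf_jdiag_label_mem[OF wf lab that])
    have "(\<Prod>h\<leftarrow>half_edges D. sp_sign \<rho> \<pi> (lab (h div 2))) = 1"
      using prod_half_edges_square[OF wf, of "sp_sign \<rho> \<pi> \<circ> lab"] sp_sign_square[OF inv] by simp
    then have "\<rho> i1 * \<rho> i2 * \<rho> j1 * \<rho> j2 * state_weight N D (?v lab) (\<pi> i1) (\<pi> i2) (\<pi> j1) (\<pi> j2)
        = state_weight N D (?v (sp_label \<pi> \<circ> lab)) i1 i2 j1 j2"
      using labels sp_conj_hvec[OF inv] by (intro state_weight_sp_conj[OF inv _ _ _ _ ij]) auto
    also have "\<dots> = state_weight N D (?v (restrict (sp_label \<pi> \<circ> lab) ?E)) i1 i2 j1 j2"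
      using wf_jdiag_edge_lt[OF wf] by (intro state_weight_cong) (simp add: hvec_def)
    finally show ?thesis .
  qed
  have "\<rho> i1 * \<rho> i2 * \<rho> j1 * \<rho> j2 * W_St N (sobasis_dual N) D (\<pi> i1, \<pi> i2) (\<pi> j1, \<pi> j2)
      = (\<Sum>lab\<in>?E \<rightarrow>\<^sub>E soidx N. state_weight N D (?v (restrict (sp_label \<pi> \<circ> lab) ?E)) i1 i2 j1 j2)"
    using ij signed_involution_lt[OF inv] by (simp add: W_St_state_sum sum_distrib_left state cong: sum.cong)
  also have "\<dots> = (\<Sum>lab\<in>?E \<rightarrow>\<^sub>E soidx N. state_weight N D (?v lab) i1 i2 j1 j2)"
    using sp_label_soidx[OF inv] by (intro sum_PiE_involution_reindex) auto
  also have "\<dots> = W_St N (sobasis_dual N) D (i1, i2) (j1, j2)"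
    using ij by (simp add: W_St_state_sum)
  finally show ?thesis .
qed

section \<open>Symmetry of the weights\<close>

lemma signed_involution_sign_change: "signed_involution N (\<lambda>i. if i = k then -1 else 1) id"
  by (simp add: signed_involution_def)

lemma signed_involution_transposition:
  "u < N \<Longrightarrow> v < N \<Longrightarrow> signed_involution N (\<lambda>_. 1) (\<lambda>i. if i = u then v else if i = v then u else i)"
  by (auto simp: signed_involution_def)

lemma W_St_odd_count_eq_0:
  assumes wf: "wf_jdiag D" and odd: "odd (count (mset [i1, i2, j1, j2]) k)"
  shows "W_St N (sobasis_dual N) D (i1, i2) (j1, j2) = (0::'k::field_char_0)"
proof (cases "i1 < N \<and> i2 < N \<and> j1 < N \<and> j2 < N")
  case True
  let ?\<rho> = "\<lambda>i. if i = k then -1 else 1" and ?W = "W_St N (sobasis_dual N) D (i1, i2) (j1, j2) :: 'k"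
  have "- ?W = ?\<rho> i1 * ?\<rho> i2 * ?\<rho> j1 * ?\<rho> j2 * ?W"
    using odd by (auto split: if_splits)
  also have "\<dots> = ?W"
    using True by (intro W_St_sp_conj[OF signed_involution_sign_change wf, unfolded id_apply]) auto
  finally show ?thesis by (simp add: neg_eq_iff_add_eq_0)
qed (auto simp: W_St_state_sum)

lemma odd_count_if_unpaired:
  assumes "\<not> (i1 = j1 \<and> i2 = j2)" "\<not> (i1 = j2 \<and> i2 = j1)" "\<not> (i1 = i2 \<and> j1 = j2)"
  shows "\<exists>k. odd (count (mset [i1, i2, j1, j2]) k)"
  using assms
  by (cases "i1 = i2"; cases "i1 = j1"; cases "i1 = j2"; cases "i2 = j1"; cases "i2 = j2"; cases "j1 = j2") auto

lemma W_St_symmetric: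
  assumes wf: "wf_jdiag D"
  shows "W_St N (sobasis_dual N :: _ \<Rightarrow> 'k::field_char_0 mat) D p q = W_St N (sobasis_dual N) D q p"
proof -
  obtain i1 i2 j1 j2 where pq: "p = (i1, i2)" "q = (j1, j2)" by (cases p, cases q)
  let ?W = "W_St N (sobasis_dual N :: _ \<Rightarrow> 'k mat) D"
  have transposition: "?W (v, u) (u, v) = ?W (u, v) (v, u)" "?W (v, v) (u, u) = ?W (u, u) (v, v)"
    if "u < N" "v < N" for u v
    using W_St_sp_conj[OF signed_involution_transposition[OF that] wf, of u v v u]
      W_St_sp_conj[OF signed_involution_transposition[OF that] wf, of u u v v] that
    by (auto split: if_splits)
  show ?thesis
  proof (cases "i1 < N \<and> i2 < N \<and> j1 < N \<and> j2 < N")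
    case True
    consider "i1 = j1" "i2 = j2" | "i1 = j2" "i2 = j1" | "i1 = i2" "j1 = j2"
      | k where "odd (count (mset [i1, i2, j1, j2]) k)"
      using odd_count_if_unpaired[of i1 j1 i2 j2] by blast
    then show ?thesis
    proof cases
      case 2
      then show ?thesis using transposition(1)[of i1 i2] True by (simp add: pq)
    next
      case 3
      then show ?thesis using transposition(2)[of i1 j1] True by (simp add: pq)
    next
      case (4 k)
      then have "odd (count (mset [j1, j2, i1, i2]) k)" by (simp add: add_mset_commute)
      with 4 show ?thesis by (simp add: pq W_St_odd_count_eq_0[OF wf])
    qed (simp add: pq)
  qed (auto simp: pq W_St_state_sum)
qed

section \<open>Stacking diagrams\<close>

definition stack :: "jdiag \<Rightarrow> jdiag \<Rightarrow> jdiag" where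
  "stack D1 D2 = \<lparr>jd_edges = jd_edges D1 + jd_edges D2,
     jd_tri = jd_tri D1 @ map (\<lambda>(a, b, c). (a + 2 * jd_edges D1, b + 2 * jd_edges D1, c + 2 * jd_edges D1)) (jd_tri D2),
     jd_str1 = jd_str1 D1 @ map (\<lambda>h. h + 2 * jd_edges D1) (jd_str1 D2),
     jd_str2 = jd_str2 D1 @ map (\<lambda>h. h + 2 * jd_edges D1) (jd_str2 D2)\<rparr>"

lemma jd_edges_stack [simp]: "jd_edges (stack D1 D2) = jd_edges D1 + jd_edges D2"
  by (simp add: stack_def)

lemma tri_half_edges_append: "tri_half_edges (xs @ ys) = tri_half_edges xs @ tri_half_edges ys"
  by (simp add: tri_half_edges_def)

lemma tri_half_edges_shift:
  "tri_half_edges (map (\<lambda>(a, b, c). (a + m, b + m, c + m)) tri) = map (\<lambda>h. h + m) (tri_half_edges tri)"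
  by (induction tri) (auto split: prod.split)

lemma wf_jdiag_stack:
  assumes wf1: "wf_jdiag D1" and wf2: "wf_jdiag D2"
  shows "wf_jdiag (stack D1 D2)"
proof -
  let ?m = "2 * jd_edges D1" and ?n = "2 * jd_edges D2"
  have "mset (half_edges (stack D1 D2)) = mset (half_edges D1) + image_mset (\<lambda>h. h + ?m) (mset (half_edges D2))"
    by (simp add: half_edges_def stack_def tri_half_edges_append tri_half_edges_shift ac_simps)
  also have "\<dots> = mset [0..<?m] + mset (map (\<lambda>h. h + ?m) [0..<?n])"
    using wf1 wf2 by (simp add: wf_jdiag_iff)
  also have "\<dots> = mset ([0..<?m] @ [?m..<?n + ?m])"
    by (simp only: map_add_upt mset_append)
  also have "[0..<?m] @ [?m..<?n + ?m] = [0..<2 * jd_edges (stack D1 D2)]"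
    using upt_add_eq_append[of 0 ?m ?n] by (simp add: stack_def algebra_simps)
  finally show ?thesis by (simp add: wf_jdiag_iff)
qed

lemma tri_weight_append: "tri_weight v (xs @ ys) = tri_weight v xs * tri_weight v ys"
  by (simp add: tri_weight_def)

lemma tri_weight_shift:
  "tri_weight v (map (\<lambda>(a, b, c). (a + m, b + m, c + m)) tri) = tri_weight (\<lambda>h. v (h + m)) tri"
  by (induction tri) (auto simp: tri_weight_def split: prod.split)

lemma strand_mat_append:
  assumes v: "\<And>h. v h \<in> carrier_mat N N"
  shows "strand_mat N v (xs @ ys) = strand_mat N v xs * strand_mat N v ys"
proof -
  have carrier: "\<And>hs. strand_mat N v hs \<in> carrier_mat N N" by (rule strand_mat_carrier, rule v)
  show ?thesis
    by (induction xs) (simp_all add: left_mult_one_mat[OF carrier] assoc_mult_mat[OF v carrier carrier])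
qed

lemma strand_mat_shift: "strand_mat N v (map (\<lambda>h. h + m) hs) = strand_mat N (\<lambda>h. v (h + m)) hs"
  by (induction hs) auto

lemma state_weight_stack:
  assumes v: "\<And>h. v h \<in> carrier_mat N N" and ij: "i1 < N" "i2 < N" "j1 < N" "j2 < N"
  shows "state_weight N (stack D1 D2) v i1 i2 j1 j2
       = (\<Sum>(k1, k2)\<in>idx2 N. state_weight N D1 v i1 i2 k1 k2
                              * state_weight N D2 (\<lambda>h. v (h + 2 * jd_edges D1)) k1 k2 j1 j2)"
proof -
  let ?v = "\<lambda>h. v (h + 2 * jd_edges D1)"
  have carrier: "strand_mat N v hs \<in> carrier_mat N N" "strand_mat N ?v hs \<in> carrier_mat N N" for hs
    by (rule strand_mat_carrier, rule v)+
  let ?A1 = "strand_mat N v (jd_str1 D1)" and ?A2 = "strand_mat N ?v (jd_str1 D2)"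
    and ?B1 = "strand_mat N v (jd_str2 D1)" and ?B2 = "strand_mat N ?v (jd_str2 D2)"
  have "state_weight N (stack D1 D2) v i1 i2 j1 j2
      = tri_weight v (jd_tri D1) * tri_weight ?v (jd_tri D2) * (?A1 * ?A2) $$ (i1, j1) * (?B1 * ?B2) $$ (i2, j2)"
    by (simp add: state_weight_def stack_def tri_weight_append tri_weight_shift strand_mat_append[OF v]
        strand_mat_shift)
  also have "\<dots> = tri_weight v (jd_tri D1) * tri_weight ?v (jd_tri D2)
      * ((\<Sum>k1<N. ?A1 $$ (i1, k1) * ?A2 $$ (k1, j1)) * (\<Sum>k2<N. ?B1 $$ (i2, k2) * ?B2 $$ (k2, j2)))"
    using ij by (simp add: index_mult_mat_sum[OF carrier(1) carrier(2)])
  also have "\<dots> = (\<Sum>k1<N. \<Sum>k2<N. tri_weight v (jd_tri D1) * tri_weight ?v (jd_tri D2)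
      * (?A1 $$ (i1, k1) * ?A2 $$ (k1, j1) * (?B1 $$ (i2, k2) * ?B2 $$ (k2, j2))))"
    unfolding sum_product by (simp only: sum_distrib_left)
  also have "\<dots> = (\<Sum>(k1, k2)\<in>idx2 N. state_weight N D1 v i1 i2 k1 k2 * state_weight N D2 ?v k1 k2 j1 j2)"
    unfolding idx2_def sum.cartesian_product[symmetric] by (simp add: state_weight_def ac_simps)
  finally show ?thesis .
qed

lemma hvec_label_merge:
  "h div 2 < m \<Longrightarrow> hvec N w (label_merge m n l1 l2) h = hvec N w l1 h"
  "h div 2 < n \<Longrightarrow> hvec N w (label_merge m n l1 l2) (h + 2 * m) = hvec N w l2 h"
  by (simp_all add: hvec_def label_merge_def)

lemma state_weight_stack_label_merge:
  assumes wf1: "wf_jdiag D1" and wf2: "wf_jdiag D2" and ij: "i1 < N" "i2 < N" "j1 < N" "j2 < N"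
  shows "state_weight N (stack D1 D2)
           (hvec N (sobasis_dual N :: _ \<Rightarrow> 'k::field mat) (label_merge (jd_edges D1) (jd_edges D2) l1 l2))
           i1 i2 j1 j2
       = (\<Sum>(k1, k2)\<in>idx2 N. state_weight N D1 (hvec N (sobasis_dual N) l1) i1 i2 k1 k2
                              * state_weight N D2 (hvec N (sobasis_dual N) l2) k1 k2 j1 j2)"
proof -
  let ?v = "hvec N (sobasis_dual N :: _ \<Rightarrow> 'k mat)" and ?l = "label_merge (jd_edges D1) (jd_edges D2) l1 l2"
  have "state_weight N D1 (?v ?l) i1 i2 k1 k2 = state_weight N D1 (?v l1) i1 i2 k1 k2" for k1 k2
    by (intro state_weight_cong) (simp add: hvec_label_merge wf_jdiag_edge_lt[OF wf1])
  moreover have "state_weight N D2 (\<lambda>h. ?v ?l (h + 2 * jd_edges D1)) k1 k2 j1 j2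
      = state_weight N D2 (?v l2) k1 k2 j1 j2" for k1 k2
    by (intro state_weight_cong) (simp add: hvec_label_merge wf_jdiag_edge_lt[OF wf2])
  ultimately show ?thesis
    using ij by (simp add: state_weight_stack)
qed

lemma W_St_stack:
  assumes wf1: "wf_jdiag D1" and wf2: "wf_jdiag D2"
  shows "W_St N (sobasis_dual N :: _ \<Rightarrow> 'k::field mat) (stack D1 D2)
       = mult2 N (W_St N (sobasis_dual N) D1) (W_St N (sobasis_dual N) D2)"
proof (intro ext)
  fix p q :: "nat \<times> nat"
  obtain i1 i2 j1 j2 where pq: "p = (i1, i2)" "q = (j1, j2)" by (cases p, cases q)
  let ?v = "hvec N (sobasis_dual N :: _ \<Rightarrow> 'k mat)"
  let ?P1 = "{..<jd_edges D1} \<rightarrow>\<^sub>E soidx N" and ?P2 = "{..<jd_edges D2} \<rightarrow>\<^sub>E soidx N"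
  show "W_St N (sobasis_dual N :: _ \<Rightarrow> 'k mat) (stack D1 D2) p q
      = mult2 N (W_St N (sobasis_dual N) D1) (W_St N (sobasis_dual N) D2) p q"
  proof (cases "i1 < N \<and> i2 < N \<and> j1 < N \<and> j2 < N")
    case True
    then have "W_St N (sobasis_dual N) (stack D1 D2) p q
        = (\<Sum>l1\<in>?P1. \<Sum>l2\<in>?P2. \<Sum>(k1, k2)\<in>idx2 N.
             state_weight N D1 (?v l1) i1 i2 k1 k2 * state_weight N D2 (?v l2) k1 k2 j1 j2)"
      by (simp add: pq W_St_state_sum sum_PiE_lessThan_add state_weight_stack_label_merge[OF wf1 wf2])
    also have "\<dots> = (\<Sum>k\<in>idx2 N. (\<Sum>l1\<in>?P1. state_weight N D1 (?v l1) i1 i2 (fst k) (snd k))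
        * (\<Sum>l2\<in>?P2. state_weight N D2 (?v l2) (fst k) (snd k) j1 j2))"
      by (simp only: split_def sum_product_swap)
    also have "\<dots> = mult2 N (W_St N (sobasis_dual N) D1) (W_St N (sobasis_dual N) D2) p q"
      using True by (auto simp: pq mult2_def W_St_state_sum idx2_def intro!: sum.cong)
    finally show ?thesis .
  qed (auto simp: pq W_St_state_sum mult2_def idx2_def)
qed

section \<open>The image of the weight system\<close>

lemma W_St_image_induct [consumes 1, case_names zero diagram]:
  assumes X: "X \<in> W_St_image N w"
    and zero: "P (\<lambda>p q. 0)"
    and diagram: "\<And>X c D. P X \<Longrightarrow> wf_jdiag D \<Longrightarrow> P (\<lambda>p q. X p q + c * W_St N w D p q)"
  shows "P X"
proof -
  obtain n :: nat and c Ds where wf: "\<forall>i<n. wf_jdiag (Ds i)" and X_eq: "X = (\<lambda>p q. \<Sum>i<n. c i * W_St N w (Ds i) p q)"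
    using X unfolding W_St_image_def by blast
  have "P (\<lambda>p q. \<Sum>i<m. c i * W_St N w (Ds i) p q)" if "m \<le> n" for m
    using that
  proof (induction m)
    case (Suc m)
    then have "P (\<lambda>p q. (\<Sum>i<m. c i * W_St N w (Ds i) p q) + c m * W_St N w (Ds m) p q)"
      using wf by (intro diagram) auto
    then show ?case by simp
  qed (simp add: zero)
  then show ?thesis using X_eq by simp
qed

lemma W_St_image_zero: "(\<lambda>p q. 0) \<in> W_St_image N w"
  unfolding W_St_image_def by (rule CollectI, rule exI[of _ 0]) simp

lemma W_St_image_add_diagram:
  assumes X: "X \<in> W_St_image N w" and D: "wf_jdiag D"
  shows "(\<lambda>p q. X p q + c * W_St N w D p q) \<in> W_St_image N w"
proof -
  obtain n :: nat and a Ds where wf: "\<forall>i<n. wf_jdiag (Ds i)" and X_eq: "X = (\<lambda>p q. \<Sum>i<n. a i * W_St N w (Ds i) p q)"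
    using X unfolding W_St_image_def by blast
  have "\<forall>i<Suc n. wf_jdiag ((Ds(n := D)) i)" using wf D by auto
  then have "(\<lambda>p q. \<Sum>i<Suc n. (a(n := c)) i * W_St N w ((Ds(n := D)) i) p q) \<in> W_St_image N w"
    unfolding W_St_image_def by blast
  moreover have "(\<Sum>i<n. (a(n := c)) i * W_St N w ((Ds(n := D)) i) p q) = X p q" for p q
    unfolding X_eq by (intro sum.cong) auto
  ultimately show ?thesis by simp
qed

lemma W_St_image_diagram: "wf_jdiag D \<Longrightarrow> W_St N w D \<in> W_St_image N w"
  using W_St_image_add_diagram[OF W_St_image_zero, where c=1] by simp

lemma W_St_image_add:
  assumes "X \<in> W_St_image N w" "Y \<in> W_St_image N w"
  shows "(\<lambda>p q. X p q + Y p q) \<in> W_St_image N w"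
  using assms(2)
proof (induction rule: W_St_image_induct)
  case (diagram Y c D)
  then show ?case
    using W_St_image_add_diagram[OF diagram(1,2), of c] by (simp add: add.assoc)
qed (use assms(1) in simp)

lemma W_St_image_scale:
  "X \<in> W_St_image N w \<Longrightarrow> (\<lambda>p q. c * X p q) \<in> W_St_image N w"
proof (induction rule: W_St_image_induct)
  case (diagram X a D)
  then show ?case
    using W_St_image_add_diagram[OF diagram(1,2), of "c * a"] by (simp add: algebra_simps)
qed (simp add: W_St_image_zero)

lemma W_St_empty: "W_St N w \<lparr>jd_edges = 0, jd_tri = [], jd_str1 = [], jd_str2 = []\<rparr> = one2 N"
proof (intro ext)
  fix p q :: "nat \<times> nat"
  obtain i1 i2 j1 j2 where pq: "p = (i1, i2)" "q = (j1, j2)" by (cases p, cases q)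
  show "W_St N w \<lparr>jd_edges = 0, jd_tri = [], jd_str1 = [], jd_str2 = []\<rparr> p q = one2 N p q"
    by (auto simp: pq W_St_state_sum state_weight_def tri_weight_def one2_def idx2_def)
qed

lemma W_St_image_one: "one2 N \<in> W_St_image N w"
  using W_St_image_diagram[of "\<lparr>jd_edges = 0, jd_tri = [], jd_str1 = [], jd_str2 = []\<rparr>" N w]
  by (simp add: W_St_empty wf_jdiag_def)

lemma W_St_image_dual_basis:
  fixes w :: "nat \<times> nat \<Rightarrow> 'k::field_char_0 mat"
  assumes dual: "is_dual_basis N w"
  shows "W_St_image N w = W_St_image N (sobasis_dual N)"
proof (intro equalityI subsetI)
  show "X \<in> W_St_image N (sobasis_dual N)" if "X \<in> W_St_image N w" for X
    using that by (induction rule: W_St_image_induct)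
      (simp_all add: W_St_image_zero W_St_image_add_diagram W_St_dual_basis[OF dual])
  show "X \<in> W_St_image N w" if "X \<in> W_St_image N (sobasis_dual N)" for X
    using that by (induction rule: W_St_image_induct)
      (simp_all add: W_St_image_zero W_St_image_add_diagram W_St_dual_basis[OF dual, symmetric])
qed

lemma mult2_zero_left: "mult2 N (\<lambda>p q. 0) Y = (\<lambda>p q. 0)"
  and mult2_zero_right: "mult2 N X (\<lambda>p q. 0) = (\<lambda>p q. 0)"
  by (simp_all add: mult2_def fun_eq_iff)

lemma mult2_add_scale_left:
  "mult2 N (\<lambda>p q. X p q + c * Z p q) Y = (\<lambda>p q. mult2 N X Y p q + c * mult2 N Z Y p q)"
  by (intro ext) (simp add: mult2_def algebra_simps sum.distrib sum_distrib_left)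

lemma mult2_add_scale_right:
  "mult2 N X (\<lambda>p q. Y p q + c * Z p q) = (\<lambda>p q. mult2 N X Y p q + c * mult2 N X Z p q)"
  by (intro ext) (simp add: mult2_def algebra_simps sum.distrib sum_distrib_left)

lemma mult2_commute_symmetric:
  assumes "\<And>p q. X p q = X q p" "\<And>p q. Y p q = Y q p" "\<And>p q. mult2 N X Y p q = mult2 N X Y q p"
  shows "mult2 N X Y = mult2 N Y X"
proof (intro ext)
  fix p q
  have "mult2 N X Y p q = mult2 N X Y q p" by (rule assms(3))
  also have "\<dots> = mult2 N Y X p q"
    unfolding mult2_def by (auto simp: assms(1,2) mult.commute intro: sum.cong)
  finally show "mult2 N X Y p q = mult2 N Y X p q" .
qed

lemma W_St_image_mult:
  assumes X: "X \<in> W_St_image N (sobasis_dual N)" and Y: "Y \<in> W_St_image N (sobasis_dual N)"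
  shows "mult2 N X Y \<in> W_St_image N (sobasis_dual N :: _ \<Rightarrow> 'k::field mat)"
proof -
  have diagram_left: "mult2 N (W_St N (sobasis_dual N) D) Y \<in> W_St_image N (sobasis_dual N :: _ \<Rightarrow> 'k mat)"
    if D: "wf_jdiag D" for D
    using Y
  proof (induction rule: W_St_image_induct)
    case zero
    then show ?case by (simp add: mult2_zero_right W_St_image_zero)
  next
    case (diagram Y c E)
    then show ?case
      by (simp add: mult2_add_scale_right W_St_stack[OF D, symmetric] W_St_image_add_diagram wf_jdiag_stack[OF D])
  qed
  show ?thesis
    using X
  proof (induction rule: W_St_image_induct)
    case zero
    then show ?case by (simp add: mult2_zero_left W_St_image_zero)
  next
    case (diagram X c D)
    then show ?case
      by (simp add: mult2_add_scale_left W_St_image_add W_St_image_scale diagram_left)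
  qed
qed

lemma W_St_image_symmetric:
  "X \<in> W_St_image N (sobasis_dual N) \<Longrightarrow> X p q = (X q p :: 'k::field_char_0)"
  by (induction rule: W_St_image_induct) (simp_all add: W_St_symmetric)

lemma W_St_image_commute:
  fixes X Y :: "'k::field_char_0 op2"
  assumes "X \<in> W_St_image N (sobasis_dual N)" "Y \<in> W_St_image N (sobasis_dual N)"
  shows "mult2 N X Y = mult2 N Y X"
  using assms by (intro mult2_commute_symmetric) (auto intro: W_St_image_symmetric W_St_image_mult)

theorem corollary5p8:
  fixes N :: nat and w :: "nat \<times> nat \<Rightarrow> 'k::field_char_0 mat"
  assumes "N \<ge> 2"
    and "is_dual_basis N w"
  shows "(\<forall>X\<in>W_St_image N w. \<forall>Y\<in>W_St_image N w.
             (\<lambda>p q. X p q + Y p q) \<in> W_St_image N w \<and> mult2 N X Y \<in> W_St_image N w)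
       \<and> (\<forall>c. \<forall>X\<in>W_St_image N w. (\<lambda>p q. c * X p q) \<in> W_St_image N w)
       \<and> one2 N \<in> W_St_image N w
       \<and> (\<forall>X\<in>W_St_image N w. \<forall>Y\<in>W_St_image N w. mult2 N X Y = mult2 N Y X)"
  unfolding W_St_image_dual_basis[OF assms(2)]
  by (simp add: W_St_image_add W_St_image_mult W_St_image_scale W_St_image_one W_St_image_commute)

end
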